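(* Let $G_1,G_2,\ldots,G_k$ be a finite sequence of pairwise disjoint connected graphs and let $x_i\in V(G_i)$. Let $G$ be the circuit of graphs $\{G_i\}_{i=1}^k$ with respect to the vertices $\{x_i\}_{i=1}^k$, i.e. the graph obtained by identifying the vertex $x_i$ of the graph $G_i$ with the $i$-th vertex of the cycle graph $C_k$. Then $$SO(G)\geq 2k\sqrt{2}+\sum_{i=1}^{k}SO(G_i).$$ The equality holds if and only if for every $1\leq i\leq k$, $G_i=K_1$.
   Context: For a finite simple graph $H$, the Sombor index is $SO(H)=\sum_{uv\in E(H)}\sqrt{d_u^2+d_v^2}$, where $d_u$ is the degree of vertex $u$ in $H$. *)

theory Defs
  imports Complex_Main
begin

definition simple_graph :: "'a set \<Rightarrow> 'a set set \<Rightarrow> bool" where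
  "simple_graph V E \<longleftrightarrow> finite V \<and>
     (\<forall>e\<in>E. \<exists>u v. u \<noteq> v \<and> u \<in> V \<and> v \<in> V \<and> e = {u, v})"

definition degree :: "'a set set \<Rightarrow> 'a \<Rightarrow> nat" where
  "degree E v = card {e \<in> E. v \<in> e}"

definition sombor :: "'a set set \<Rightarrow> real" where
  "sombor E = (\<Sum>e\<in>E. sqrt (\<Sum>v\<in>e. (real (degree E v))^2))"

definition adj_rel :: "'a set set \<Rightarrow> ('a \<times> 'a) set" where
  "adj_rel E = {(u, v). {u, v} \<in> E}"

definition connected_graph :: "'a set \<Rightarrow> 'a set set \<Rightarrow> bool" where
  "connected_graph V E \<longleftrightarrow> V \<noteq> {} \<and> (\<forall>u\<in>V. \<forall>v\<in>V. (u, v) \<in> (adj_rel E)\<^sup>*)"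

text \<open>Circuit of graphs (V i, E i), i < k, w.r.t. vertices x i: vertex x i is identified
  with the i-th vertex of the cycle C_k (vertices 0..k-1, edges {i, (i+1) mod k}).\<close>
definition circuit_E :: "nat \<Rightarrow> (nat \<Rightarrow> 'a set set) \<Rightarrow> (nat \<Rightarrow> 'a) \<Rightarrow> 'a set set" where
  "circuit_E k E x = (\<Union>i<k. E i) \<union> {{x i, x (Suc i mod k)} | i. i < k}"

end

(* Every edge of G_i has, in G, endpoint degrees at least those it has in G_i, so it contributes
   at least as much to SO(G) as to SO(G_i).  Each root x_i gains exactly the two cycle edges at it,
   so deg_G(x_i) = deg_{G_i}(x_i) + 2 >= 2, and each of the k cycle edges contributes
   sqrt(d^2 + d'^2) >= sqrt 8 = 2 sqrt 2.  Equality forces deg_G(x_i) = 2 for all i, i.e. x_i is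
   isolated in G_i, which for a connected G_i means G_i = K_1; conversely, if all G_i = K_1 then G is
   the cycle C_k, whose Sombor index is 2k sqrt 2. *)
theory Submission
  imports Defs
begin

lemma simple_graph_edge_subset: "simple_graph V E \<Longrightarrow> e \<in> E \<Longrightarrow> e \<subseteq> V"
  unfolding simple_graph_def by fastforce

lemma simple_graph_finite_edges:
  assumes "simple_graph V E"
  shows "finite E"
proof -
  have "E \<subseteq> Pow V" using simple_graph_edge_subset[OF assms] by auto
  moreover have "finite V" using assms unfolding simple_graph_def by blast
  ultimately show ?thesis by (metis finite_Pow_iff finite_subset)
qed

lemma simple_graph_singleton_edgeless: "simple_graph {v} E \<Longrightarrow> E = {}"
  unfolding simple_graph_def by auto

lemma degree_mono: "A \<subseteq> B \<Longrightarrow> finite B \<Longrightarrow> degree A v \<le> degree B v"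
  unfolding degree_def by (intro card_mono) auto

lemma degree_eq_0_iff: "finite E \<Longrightarrow> degree E v = 0 \<longleftrightarrow> (\<forall>e\<in>E. v \<notin> e)"
  unfolding degree_def by auto

lemma connected_graph_isolated_vertex:
  assumes "connected_graph V E" "u \<in> V" "\<forall>e\<in>E. u \<notin> e"
  shows "V = {u}"
proof (rule ccontr)
  assume "V \<noteq> {u}"
  then obtain v where "v \<in> V" "v \<noteq> u" using assms(2) by blast
  moreover have "(u, v) \<in> (adj_rel E)\<^sup>*"
    using assms(1,2) \<open>v \<in> V\<close> unfolding connected_graph_def by blast
  ultimately obtain w where "(u, w) \<in> adj_rel E"
    by (metis converse_rtranclE)
  then show False using assms(3) unfolding adj_rel_def by auto
qed

definition sombor_weight :: "'a set set \<Rightarrow> 'a set \<Rightarrow> real" where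
  "sombor_weight F e = sqrt (\<Sum>v\<in>e. (real (degree F v))\<^sup>2)"

lemma sombor_eq_sum_sombor_weight: "sombor E = (\<Sum>e\<in>E. sombor_weight E e)"
  unfolding sombor_def sombor_weight_def ..

lemma sombor_weight_mono: "A \<subseteq> B \<Longrightarrow> finite B \<Longrightarrow> sombor_weight A e \<le> sombor_weight B e"
  unfolding sombor_weight_def by (intro real_sqrt_le_mono sum_mono power_mono) (auto simp: degree_mono)

lemma sombor_weight_doubleton:
  "u \<noteq> v \<Longrightarrow> sombor_weight F {u, v} = sqrt ((real (degree F u))\<^sup>2 + (real (degree F v))\<^sup>2)"
  unfolding sombor_weight_def by simp

lemma sombor_le_sum_sombor_weight: "A \<subseteq> B \<Longrightarrow> finite B \<Longrightarrow> sombor A \<le> (\<Sum>e\<in>A. sombor_weight B e)"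
  unfolding sombor_eq_sum_sombor_weight by (intro sum_mono sombor_weight_mono)

lemma two_sqrt2_le_sqrt_sum_squares:
  fixes a b :: real
  assumes "2 \<le> a" "2 \<le> b"
  shows "2 * sqrt 2 \<le> sqrt (a\<^sup>2 + b\<^sup>2)"
    and "sqrt (a\<^sup>2 + b\<^sup>2) = 2 * sqrt 2 \<longleftrightarrow> a = 2 \<and> b = 2"
proof -
  have eight: "2 * sqrt 2 = sqrt (8::real)"
    by (metis mult.commute num_double numeral_times_numeral real_sqrt_four real_sqrt_mult)
  have "4 \<le> a\<^sup>2" "4 \<le> b\<^sup>2" using assms power_mono[of 2 _ 2] by fastforce+
  moreover have "a\<^sup>2 = 2\<^sup>2 \<longleftrightarrow> a = 2" "b\<^sup>2 = 2\<^sup>2 \<longleftrightarrow> b = 2"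
    using assms by (simp_all only: power2_eq_iff_nonneg)
  ultimately show "2 * sqrt 2 \<le> sqrt (a\<^sup>2 + b\<^sup>2)"
    and "sqrt (a\<^sup>2 + b\<^sup>2) = 2 * sqrt 2 \<longleftrightarrow> a = 2 \<and> b = 2"
    unfolding eight by auto
qed

definition cycle_edges :: "nat \<Rightarrow> (nat \<Rightarrow> 'a) \<Rightarrow> 'a set set" where
  "cycle_edges k x = (\<lambda>i. {x i, x (Suc i mod k)}) ` {..<k}"

lemma circuit_E_eq: "circuit_E k E x = (\<Union>i<k. E i) \<union> cycle_edges k x"
  unfolding circuit_E_def cycle_edges_def by auto

lemma Suc_mod_eq_iff:
  fixes i j k :: nat
  assumes "i < k" "j < k"
  shows "Suc j mod k = i \<longleftrightarrow> j = (i + k - 1) mod k"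
  using assms by (cases "Suc j = k") (auto simp: mod_if)

lemma Suc_mod_neq: "2 \<le> k \<Longrightarrow> i < k \<Longrightarrow> Suc i mod k \<noteq> (i::nat)"
  by (cases "Suc i = k") (auto simp: mod_if)

lemma Suc_Suc_mod_neq: "3 \<le> k \<Longrightarrow> i < k \<Longrightarrow> Suc (Suc i mod k) mod k \<noteq> (i::nat)"
  by (cases "Suc i = k"; cases "Suc (Suc i) = k") (auto simp: mod_if)

(* For k = 2 the two cycle edges would coincide. *)
lemma inj_on_cycle_edge:
  assumes "3 \<le> k" "inj_on x {..<k}"
  shows "inj_on (\<lambda>i. {x i, x (Suc i mod k)}) {..<k}"
proof (rule inj_onI)
  fix i j assume ij: "i \<in> {..<k}" "j \<in> {..<k}" and "{x i, x (Suc i mod k)} = {x j, x (Suc j mod k)}"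
  moreover have "Suc i mod k \<in> {..<k}" "Suc j mod k \<in> {..<k}" using assms(1) by auto
  ultimately have "i = j \<or> (i = Suc j mod k \<and> j = Suc i mod k)"
    using assms(2) by (auto simp: doubleton_eq_iff dest: inj_onD)
  moreover have "Suc (Suc i mod k) mod k \<noteq> i" using ij assms(1) Suc_Suc_mod_neq by simp
  ultimately show "i = j" by auto
qed

lemma sum_cycle_edges:
  assumes "3 \<le> k" "inj_on x {..<k}"
  shows "(\<Sum>e\<in>cycle_edges k x. f e) = (\<Sum>i<k. f {x i, x (Suc i mod k)})"
  unfolding cycle_edges_def using sum.reindex[OF inj_on_cycle_edge[OF assms]] by simp

lemma degree_cycle_edges:
  assumes "3 \<le> k" "inj_on x {..<k}" "i < k"
  shows "degree (cycle_edges k x) (x i) = 2"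
proof -
  let ?edge = "\<lambda>j. {x j, x (Suc j mod k)}"
  have "{j \<in> {..<k}. x i \<in> ?edge j} = {j \<in> {..<k}. j = i \<or> Suc j mod k = i}"
    using assms by (auto dest: inj_onD)
  also have "\<dots> = {i, (i + k - 1) mod k}"
    using assms(1,3) Suc_mod_eq_iff[OF assms(3)] by auto
  finally have "{e \<in> cycle_edges k x. x i \<in> e} = ?edge ` {i, (i + k - 1) mod k}"
    unfolding cycle_edges_def by blast
  moreover have "(i + k - 1) mod k \<noteq> i" using assms(1,3) by (auto simp: mod_if)
  moreover have "inj_on ?edge {i, (i + k - 1) mod k}"
    using inj_on_cycle_edge[OF assms(1,2)] by (rule inj_on_subset) (use assms in auto)
  ultimately show ?thesis unfolding degree_def by (simp add: card_image)
qed

locale graph_circuit =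
  fixes k :: nat and V :: "nat \<Rightarrow> 'a set" and E :: "nat \<Rightarrow> 'a set set" and x :: "nat \<Rightarrow> 'a"
  assumes three_le_k: "3 \<le> k"
    and simple: "\<And>i. i < k \<Longrightarrow> simple_graph (V i) (E i)"
    and disjoint: "\<And>i j. i < k \<Longrightarrow> j < k \<Longrightarrow> i \<noteq> j \<Longrightarrow> V i \<inter> V j = {}"
    and root_in: "\<And>i. i < k \<Longrightarrow> x i \<in> V i"
begin

abbreviation G :: "'a set set" where
  "G \<equiv> circuit_E k E x"

lemma inj_on_roots: "inj_on x {..<k}"
proof (rule inj_onI, rule ccontr)
  fix i j assume "i \<in> {..<k}" "j \<in> {..<k}" "x i = x j" "i \<noteq> j"
  then show False using disjoint[of i j] root_in[of i] root_in[of j] by auto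
qed

lemma root_in_edge_imp_eq:
  assumes "i < k" "j < k" "e \<in> E j" "x i \<in> e"
  shows "j = i"
proof (rule ccontr)
  assume "j \<noteq> i"
  moreover have "x i \<in> V j"
    using simple_graph_edge_subset[OF simple[OF assms(2)] assms(3)] assms(4) by blast
  ultimately show False using disjoint[OF assms(1,2)] root_in[OF assms(1)] by blast
qed

lemma edges_disjoint:
  assumes "i < k" "j < k" "i \<noteq> j"
  shows "E i \<inter> E j = {}"
proof -
  have "e \<noteq> {}" if "e \<in> E i" for e
    using simple[OF assms(1)] that unfolding simple_graph_def by auto
  moreover have "e \<subseteq> V i \<inter> V j" if "e \<in> E i" "e \<in> E j" for e
    using simple_graph_edge_subset[OF simple] that assms by blast
  ultimately show ?thesis using disjoint[OF assms] by blast
qed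

lemma edges_cycle_edges_disjoint: "(\<Union>i<k. E i) \<inter> cycle_edges k x = {}"
proof -
  have "{x j, x (Suc j mod k)} \<notin> E i" if "i < k" "j < k" for i j
  proof
    assume edge: "{x j, x (Suc j mod k)} \<in> E i"
    have "Suc j mod k < k" using three_le_k by simp
    have "j = i" "Suc j mod k = i"
      using root_in_edge_imp_eq[OF \<open>j < k\<close> \<open>i < k\<close> edge]
        root_in_edge_imp_eq[OF \<open>Suc j mod k < k\<close> \<open>i < k\<close> edge] by simp_all
    then show False using Suc_mod_neq[of k i] three_le_k \<open>i < k\<close> by simp
  qed
  then show ?thesis unfolding cycle_edges_def by blast
qed

lemma finite_edges: "i < k \<Longrightarrow> finite (E i)"
  using simple simple_graph_finite_edges by blast

lemma finite_circuit: "finite G"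
  unfolding circuit_E_eq cycle_edges_def using finite_edges by simp

lemma degree_circuit_root:
  assumes "i < k"
  shows "degree G (x i) = degree (E i) (x i) + 2"
proof -
  have "{e \<in> G. x i \<in> e} = {e \<in> E i. x i \<in> e} \<union> {e \<in> cycle_edges k x. x i \<in> e}"
    unfolding circuit_E_eq using root_in_edge_imp_eq[OF assms] assms by blast
  moreover have "{e \<in> E i. x i \<in> e} \<inter> {e \<in> cycle_edges k x. x i \<in> e} = {}"
    using edges_cycle_edges_disjoint assms by blast
  moreover have "finite (E i)" "finite (cycle_edges k x)"
    using finite_edges[OF assms] by (auto simp: cycle_edges_def)
  ultimately show ?thesis
    using degree_cycle_edges[OF three_le_k inj_on_roots assms]
    unfolding degree_def by (simp add: card_Un_disjoint)
qed

lemma sombor_circuit_split: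
  "sombor G = (\<Sum>i<k. \<Sum>e\<in>E i. sombor_weight G e) + (\<Sum>i<k. sombor_weight G {x i, x (Suc i mod k)})"
proof -
  have "finite (\<Union>i<k. E i)" "finite (cycle_edges k x)"
    using finite_circuit unfolding circuit_E_eq by auto
  have "sombor G = (\<Sum>e\<in>(\<Union>i<k. E i) \<union> cycle_edges k x. sombor_weight G e)"
    by (metis circuit_E_eq sombor_eq_sum_sombor_weight)
  also have "\<dots> = (\<Sum>e\<in>(\<Union>i<k. E i). sombor_weight G e) + (\<Sum>e\<in>cycle_edges k x. sombor_weight G e)"
    by (rule sum.union_disjoint) (fact | rule edges_cycle_edges_disjoint)+
  also have "(\<Sum>e\<in>(\<Union>i<k. E i). sombor_weight G e) = (\<Sum>i<k. \<Sum>e\<in>E i. sombor_weight G e)"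
    using finite_edges edges_disjoint by (intro sum.UNION_disjoint) auto
  also have "(\<Sum>e\<in>cycle_edges k x. sombor_weight G e) = (\<Sum>i<k. sombor_weight G {x i, x (Suc i mod k)})"
    by (rule sum_cycle_edges[OF three_le_k inj_on_roots])
  finally show ?thesis .
qed

lemma sombor_weight_cycle_edge:
  assumes "i < k"
  shows "2 * sqrt 2 \<le> sombor_weight G {x i, x (Suc i mod k)}"
    and "sombor_weight G {x i, x (Suc i mod k)} = 2 * sqrt 2 \<longleftrightarrow>
           degree (E i) (x i) = 0 \<and> degree (E (Suc i mod k)) (x (Suc i mod k)) = 0"
proof -
  have succ: "Suc i mod k < k" "Suc i mod k \<noteq> i"
    using assms three_le_k Suc_mod_neq[of k i] by auto
  then have "x i \<noteq> x (Suc i mod k)" using inj_on_roots assms by (auto dest: inj_onD)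
  then have weight: "sombor_weight G {x i, x (Suc i mod k)} =
      sqrt ((real (degree G (x i)))\<^sup>2 + (real (degree G (x (Suc i mod k))))\<^sup>2)"
    by (rule sombor_weight_doubleton)
  show "2 * sqrt 2 \<le> sombor_weight G {x i, x (Suc i mod k)}"
    and "sombor_weight G {x i, x (Suc i mod k)} = 2 * sqrt 2 \<longleftrightarrow>
           degree (E i) (x i) = 0 \<and> degree (E (Suc i mod k)) (x (Suc i mod k)) = 0"
    unfolding weight using two_sqrt2_le_sqrt_sum_squares degree_circuit_root[OF assms]
      degree_circuit_root[OF succ(1)] by simp_all
qed

lemma sum_sombor_le: "(\<Sum>i<k. sombor (E i)) \<le> (\<Sum>i<k. \<Sum>e\<in>E i. sombor_weight G e)"
  by (intro sum_mono sombor_le_sum_sombor_weight finite_circuit) (auto simp: circuit_E_eq)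

lemma sum_sombor_weight_cycle_ge: "2 * real k * sqrt 2 \<le> (\<Sum>i<k. sombor_weight G {x i, x (Suc i mod k)})"
proof -
  have "(\<Sum>i<k. 2 * sqrt 2) \<le> (\<Sum>i<k. sombor_weight G {x i, x (Suc i mod k)})"
    using sombor_weight_cycle_edge(1) by (intro sum_mono) simp
  then show ?thesis by simp
qed

theorem sombor_circuit_ge: "2 * real k * sqrt 2 + (\<Sum>i<k. sombor (E i)) \<le> sombor G"
  using sombor_circuit_split sum_sombor_le sum_sombor_weight_cycle_ge by linarith

theorem sombor_circuit_eq_iff:
  assumes conn: "\<And>i. i < k \<Longrightarrow> connected_graph (V i) (E i)"
  shows "sombor G = 2 * real k * sqrt 2 + (\<Sum>i<k. sombor (E i)) \<longleftrightarrow> (\<forall>i<k. V i = {x i})"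
proof
  assume "sombor G = 2 * real k * sqrt 2 + (\<Sum>i<k. sombor (E i))"
  then have "(\<Sum>i<k. sombor_weight G {x i, x (Suc i mod k)} - 2 * sqrt 2) = 0"
    using sombor_circuit_split sum_sombor_le sum_sombor_weight_cycle_ge
    by (simp add: sum_subtractf)
  then have "sombor_weight G {x i, x (Suc i mod k)} = 2 * sqrt 2" if "i < k" for i
    using sum_nonneg_eq_0_iff[of "{..<k}" "\<lambda>i. sombor_weight G {x i, x (Suc i mod k)} - 2 * sqrt 2"]
      sombor_weight_cycle_edge(1) that by simp
  then have "degree (E i) (x i) = 0" if "i < k" for i
    using sombor_weight_cycle_edge(2) that by blast
  then have "\<forall>e\<in>E i. x i \<notin> e" if "i < k" for i
    using degree_eq_0_iff[OF finite_edges] that by blast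
  then show "\<forall>i<k. V i = {x i}"
    using connected_graph_isolated_vertex[OF conn root_in] by blast
next
  assume "\<forall>i<k. V i = {x i}"
  then have edgeless: "E i = {}" if "i < k" for i
    using simple_graph_singleton_edgeless simple that by metis
  then have "sombor_weight G {x i, x (Suc i mod k)} = 2 * sqrt 2" if "i < k" for i
    using sombor_weight_cycle_edge(2) that three_le_k by (simp add: degree_def)
  then show "sombor G = 2 * real k * sqrt 2 + (\<Sum>i<k. sombor (E i))"
    using sombor_circuit_split edgeless by (simp add: sombor_def)
qed

end

theorem mainTheorem6:
  fixes k :: nat and V :: "nat \<Rightarrow> 'a set" and E :: "nat \<Rightarrow> 'a set set" and x :: "nat \<Rightarrow> 'a"
  assumes k3: "k \<ge> 3"
    and graphs: "\<forall>i<k. simple_graph (V i) (E i)"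
    and conn: "\<forall>i<k. connected_graph (V i) (E i)"
    and disj: "\<forall>i<k. \<forall>j<k. i \<noteq> j \<longrightarrow> V i \<inter> V j = {}"
    and xin: "\<forall>i<k. x i \<in> V i"
  shows "sombor (circuit_E k E x) \<ge> 2 * real k * sqrt 2 + (\<Sum>i<k. sombor (E i)) \<and>
         (sombor (circuit_E k E x) = 2 * real k * sqrt 2 + (\<Sum>i<k. sombor (E i))
           \<longleftrightarrow> (\<forall>i<k. V i = {x i}))"
proof -
  interpret graph_circuit k V E x
    using assms by unfold_locales auto
  show ?thesis
    using sombor_circuit_ge sombor_circuit_eq_iff conn by blast
qed

end
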